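(* Fix $S\in\mathbb{R}^{K_0\times K_1}$, $\gamma_{(0)}$ and $\theta=(\theta^{(1)},\dots,\theta^{(N)})$ with $\theta^{(n)}\in\mathbb{P}_L^{K_n\times K_{n+1}}$ having all entries positive. For $n=1,\dots,N$ define $A_{(n)}\in\mathbb{R}^{K_{n+1}\times K_n}$ by $\{A_{(n)}\}_{k_{n+1},k_n}=-\delta_n\log\theta^{(n)}_{k_n,k_{n+1}}$, and set $A_{(N+1)}:=0$. If $\min\{\epsilon_n: n=1,\dots,N+1\}>\max\{\|A_{(n)}\|_2+\|A_{(n+1)}\|_2: n=1,\dots,N\}$, then the EON objective $L$, viewed as a function of $(\gamma_{(1)},\dots,\gamma_{(N+1)})\in\mathbb{P}_L^{K_1\times T}\times\dots\times\mathbb{P}_L^{K_{N+1}\times T}$, is strictly convex, and consequently its minimizer $\hat\Gamma$ is unique.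
   Context: $\mathbb{P}^K$ is the probability simplex; $\mathbb{P}_L^{a\times b}$ are $a\times b$ matrices with all columns in $\mathbb{P}^a$. $\|\cdot\|_2$ is the spectral norm. Data $X(1),\dots,X(T)\in\mathbb{R}^{K_0}$, $\gamma_{(0)}\in\mathbb{R}^{K_0\times T}$ nonnegative, $\delta_n>0$, $\epsilon_n>0$. Natural logarithms with $0\log0=0$. The EON objective is $L=\sum_{t=1}^T\Big(\sum_{k_1}\{\gamma_{(1)}\}_{k_1,t}\sum_{d}\{\gamma_{(0)}\}_{d,t}(\{X(t)\}_d-S_{d,k_1})^2-\sum_{n=1}^N\delta_n\sum_{k_n,k_{n+1}}\{\gamma_{(n)}\}_{k_n,t}\{\gamma_{(n+1)}\}_{k_{n+1},t}\log\theta^{(n)}_{k_n,k_{n+1}}+\sum_{n=0}^{N+1}\epsilon_n\sum_{k_n}\{\gamma_{(n)}\}_{k_n,t}\log\{\gamma_{(n)}\}_{k_n,t}\Big)$. *)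

theory Defs
  imports Complex_Main
begin

text \<open>Matrices are functions nat => nat => real indexed from 0.
  K n is the size K_n (n = 0..N+1). Data: X t d = {X(t)}_d, g0 d t = {gamma_(0)}_{d,t},
  S d k = S_{d,k}, th n k k' = theta^(n)_{k,k'}.  The optimisation variable
  G n k t = {gamma_(n)}_{k,t} for n = 1..N+1 (zero outside the index ranges).\<close>

definition xlogx :: "real \<Rightarrow> real" where
  "xlogx x = (if x = 0 then 0 else x * ln x)"

definition gam :: "(nat \<Rightarrow> nat \<Rightarrow> real) \<Rightarrow> (nat \<Rightarrow> nat \<Rightarrow> nat \<Rightarrow> real) \<Rightarrow> nat \<Rightarrow> nat \<Rightarrow> nat \<Rightarrow> real" where
  "gam g0 G n = (if n = 0 then g0 else G n)"

definition EON_L ::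
  "nat \<Rightarrow> (nat \<Rightarrow> nat) \<Rightarrow> nat \<Rightarrow> (nat \<Rightarrow> nat \<Rightarrow> real) \<Rightarrow> (nat \<Rightarrow> nat \<Rightarrow> real)
   \<Rightarrow> (nat \<Rightarrow> nat \<Rightarrow> real) \<Rightarrow> (nat \<Rightarrow> nat \<Rightarrow> nat \<Rightarrow> real) \<Rightarrow> (nat \<Rightarrow> real) \<Rightarrow> (nat \<Rightarrow> real)
   \<Rightarrow> (nat \<Rightarrow> nat \<Rightarrow> nat \<Rightarrow> real) \<Rightarrow> real" where
  "EON_L N K T X g0 S th \<delta> \<epsilon> G =
    (\<Sum>t<T.
       (\<Sum>k1<K 1. gam g0 G 1 k1 t * (\<Sum>d<K 0. g0 d t * (X t d - S d k1)\<^sup>2))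
     - (\<Sum>n\<in>{1..N}. \<delta> n * (\<Sum>kn<K n. \<Sum>kn1<K (Suc n).
            gam g0 G n kn t * gam g0 G (Suc n) kn1 t * ln (th n kn kn1)))
     + (\<Sum>n\<in>{0..N+1}. \<epsilon> n * (\<Sum>kn<K n. xlogx (gam g0 G n kn t))))"

definition EON_domain :: "nat \<Rightarrow> (nat \<Rightarrow> nat) \<Rightarrow> nat \<Rightarrow> (nat \<Rightarrow> nat \<Rightarrow> nat \<Rightarrow> real) set" where
  "EON_domain N K T = {G.
     (\<forall>n\<in>{1..N+1}. \<forall>t<T. (\<forall>k<K n. 0 \<le> G n k t) \<and> (\<Sum>k<K n. G n k t) = 1) \<and>
     (\<forall>n k t. (n \<notin> {1..N+1} \<or> K n \<le> k \<or> T \<le> t) \<longrightarrow> G n k t = 0)}"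

definition spec_norm :: "nat \<Rightarrow> nat \<Rightarrow> (nat \<Rightarrow> nat \<Rightarrow> real) \<Rightarrow> real" where
  "spec_norm m p A = Sup {sqrt (\<Sum>i<m. (\<Sum>j<p. A i j * x j)\<^sup>2) | x. (\<Sum>j<p. (x j)\<^sup>2) \<le> 1}"

definition Amat :: "nat \<Rightarrow> (nat \<Rightarrow> nat \<Rightarrow> nat \<Rightarrow> real) \<Rightarrow> (nat \<Rightarrow> real) \<Rightarrow> nat \<Rightarrow> nat \<Rightarrow> nat \<Rightarrow> real" where
  "Amat N th \<delta> n = (\<lambda>i j. if n \<in> {1..N} then - \<delta> n * ln (th n j i) else 0)"

definition strictly_convex_on_set :: "(nat \<Rightarrow> nat \<Rightarrow> nat \<Rightarrow> real) set \<Rightarrow> ((nat \<Rightarrow> nat \<Rightarrow> nat \<Rightarrow> real) \<Rightarrow> real) \<Rightarrow> bool" where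
  "strictly_convex_on_set D f \<longleftrightarrow>
     (\<forall>x\<in>D. \<forall>y\<in>D. \<forall>u::real. x \<noteq> y \<and> 0 < u \<and> u < 1 \<longrightarrow>
        f (\<lambda>n k t. u * x n k t + (1 - u) * y n k t) < u * f x + (1 - u) * f y)"

end

theory Submission
  imports Defs "HOL-Analysis.Analysis" "HOL-Real_Asymp.Real_Asymp"
begin

text \<open>
On the feasible set every entry of gamma_(n) lies in [0,1], where x log x is 1-strongly convex, so
along a segment between two feasible points the Jensen gap of the entropy terms is at least
u(1-u)/2 * sum_n eps_n |gamma_n - gamma'_n|^2. The fit term is linear, and each coupling term is
bilinear in two consecutive layers; its contribution to the gap is
u(1-u) <gamma_n - gamma'_n, A_(n) (gamma_(n+1) - gamma'_(n+1))>, which is at least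
-u(1-u)/2 * |A_(n)|_2 (|gamma_n - gamma'_n|^2 + |gamma_(n+1) - gamma'_(n+1)|^2).
Layer n thus collects the coefficient |A_(n-1)|_2 + |A_(n)|_2 < eps_n, and the total gap is
positive unless the two points coincide. A strictly convex function has at most one minimiser on
a convex set, and one exists because L is continuous on the compact feasible set.
\<close>

section \<open>Strong convexity of x log x on [0,1]\<close>

lemma ln_minus_self_mono:
  fixes x y :: real
  assumes "0 < x" "x \<le> y" "y \<le> 1"
  shows "ln x - x \<le> ln y - y"
proof -
  have y: "0 < y" using assms by linarith
  have "ln x - ln y = ln (x / y)" using assms y by (simp add: ln_div)
  also have "\<dots> \<le> x / y - 1" using assms y by (intro ln_le_minus_one) simp
  also have "\<dots> = (x - y) / y" using y by (simp add: field_simps)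
  also have "\<dots> \<le> x - y"
    using assms y by (simp add: divide_le_eq mult_le_cancel_left1)
  finally show ?thesis by simp
qed

lemma xlogx_tangent:
  fixes m a :: real
  assumes "0 < m" "m \<le> 1" "0 \<le> a" "a \<le> 1"
  shows "xlogx m + (ln m + 1) * (a - m) + (a - m)\<^sup>2 / 2 \<le> xlogx a"
proof (cases "a = 0")
  case True
  have "m * ln m + (ln m + 1) * (0 - m) + (0 - m)\<^sup>2 / 2 = m * (m / 2 - 1)"
    by (simp add: algebra_simps power2_eq_square)
  also have "\<dots> \<le> 0" using assms by (simp add: mult_nonneg_nonpos)
  finally show ?thesis using True by (simp add: xlogx_def)
next
  case False
  then have a: "0 < a" using assms by simp
  define h where "h x = x * ln x - (ln m + 1) * (x - m) - (x - m)\<^sup>2 / 2" for x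
  \<comment> \<open>h' has the sign of x - m on (0,1], since ln x - x is increasing there\<close>
  define h' where "h' x = (ln x - x) - (ln m - m)" for x
  have h_deriv: "(h has_real_derivative h' x) (at x)" if "0 < x" for x
    unfolding h_def h'_def using that
    by (auto intro!: derivative_eq_intros simp: power2_eq_square) (simp add: field_simps)
  have "h m \<le> h a"
  proof (cases "m \<le> a")
    case True
    show ?thesis
    proof (rule deriv_nonneg_imp_mono[OF _ _ True])
      fix x assume "x \<in> {m..a}"
      then show "(h has_real_derivative h' x) (at x)" and "0 \<le> h' x"
        using h_deriv ln_minus_self_mono[of m x] assms unfolding h'_def by auto
    qed
  next
    case False
    have "- h a \<le> - h m"
    proof (rule deriv_nonneg_imp_mono[of a m "\<lambda>x. - h x" "\<lambda>x. - h' x"])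
      fix x assume "x \<in> {a..m}"
      then show "((\<lambda>x. - h x) has_real_derivative - h' x) (at x)" and "0 \<le> - h' x"
        using h_deriv[THEN DERIV_minus] ln_minus_self_mono[of x m] a assms
        unfolding h'_def by auto
    qed (use False in auto)
    then show ?thesis by simp
  qed
  then show ?thesis using a assms by (simp add: h_def xlogx_def)
qed

lemma xlogx_jensen_gap:
  fixes a b u :: real
  assumes "0 \<le> a" "a \<le> 1" "0 \<le> b" "b \<le> 1" "0 < u" "u < 1"
  shows "u * (1 - u) * (a - b)\<^sup>2 / 2 \<le> u * xlogx a + (1 - u) * xlogx b - xlogx (u * a + (1 - u) * b)"
proof -
  define m where "m = u * a + (1 - u) * b"
  have parts: "0 \<le> u * a" "0 \<le> (1 - u) * b" "u * a \<le> u" "(1 - u) * b \<le> 1 - u"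
    using assms by (simp_all add: mult_left_le)
  then have m_ge: "0 \<le> m" and m_le: "m \<le> 1" by (simp_all add: m_def)
  show ?thesis
  proof (cases "m = 0")
    case True
    then have "u * a = 0" "(1 - u) * b = 0" using parts unfolding m_def by linarith+
    then have "a = 0" "b = 0" using assms by auto
    then show ?thesis by (simp add: xlogx_def)
  next
    case False
    then have m_pos: "0 < m" using m_ge by simp
    have diffs: "a - m = (1 - u) * (a - b)" "b - m = - u * (a - b)"
      by (simp_all add: m_def algebra_simps)
    have "u * (xlogx m + (ln m + 1) * (a - m) + (a - m)\<^sup>2 / 2)
        + (1 - u) * (xlogx m + (ln m + 1) * (b - m) + (b - m)\<^sup>2 / 2)
        = xlogx m + u * (1 - u) * (a - b)\<^sup>2 / 2"
      unfolding diffs by (simp add: power2_eq_square field_simps)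
    moreover have "u * (xlogx m + (ln m + 1) * (a - m) + (a - m)\<^sup>2 / 2) \<le> u * xlogx a"
      "(1 - u) * (xlogx m + (ln m + 1) * (b - m) + (b - m)\<^sup>2 / 2) \<le> (1 - u) * xlogx b"
      using xlogx_tangent[OF m_pos m_le] assms by (simp_all add: mult_left_mono)
    ultimately show ?thesis by (simp add: m_def)
  qed
qed

text \<open>Since ln 0 = 0 in Isabelle, the case split in the definition of xlogx is vacuous.\<close>

lemma xlogx_eq: "xlogx = (\<lambda>x. x * ln x)"
  by (simp add: fun_eq_iff xlogx_def)

lemma continuous_on_xlogx: "continuous_on {0..} xlogx"
proof -
  have "continuous (at x within {0..}) (\<lambda>x. x * ln x)" if "0 \<le> x" for x :: real
  proof (cases "x = 0")
    case True
    have "((\<lambda>x::real. x * ln x) \<longlongrightarrow> 0) (at_right 0)" by real_asymp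
    then show ?thesis unfolding True continuous_within at_within_Ici_at_right by simp
  next
    case False
    then have "isCont (\<lambda>x. x * ln x) x" using that by (auto intro!: continuous_intros)
    then show ?thesis by (rule continuous_at_imp_continuous_at_within)
  qed
  then show ?thesis unfolding xlogx_eq using continuous_on_eq_continuous_within by auto
qed

section \<open>The spectral norm\<close>

lemma bdd_above_spec_norm_set:
  fixes A :: "nat \<Rightarrow> nat \<Rightarrow> real"
  shows "bdd_above {sqrt (\<Sum>i<m. (\<Sum>j<p. A i j * x j)\<^sup>2) | x. (\<Sum>j<p. (x j)\<^sup>2) \<le> (1::real)}"
proof (rule bdd_aboveI, clarify)
  fix x :: "nat \<Rightarrow> real" assume x: "(\<Sum>j<p. (x j)\<^sup>2) \<le> 1"
  have "(\<Sum>j<p. A i j * x j)\<^sup>2 \<le> (\<Sum>j<p. (A i j)\<^sup>2)" for i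
  proof -
    have "(\<Sum>j<p. A i j * x j)\<^sup>2 \<le> (\<Sum>j<p. (A i j)\<^sup>2) * (\<Sum>j<p. (x j)\<^sup>2)"
      by (rule Cauchy_Schwarz_ineq_sum)
    also have "\<dots> \<le> (\<Sum>j<p. (A i j)\<^sup>2)"
      using x by (intro mult_left_le) (auto intro: sum_nonneg)
    finally show ?thesis .
  qed
  then show "sqrt (\<Sum>i<m. (\<Sum>j<p. A i j * x j)\<^sup>2) \<le> sqrt (\<Sum>i<m. \<Sum>j<p. (A i j)\<^sup>2)"
    by (intro real_sqrt_le_mono sum_mono)
qed

lemma spec_norm_ge:
  assumes "(\<Sum>j<p. (x j)\<^sup>2) \<le> 1"
  shows "sqrt (\<Sum>i<m. (\<Sum>j<p. A i j * x j)\<^sup>2) \<le> spec_norm m p A"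
  unfolding spec_norm_def using assms by (intro cSup_upper bdd_above_spec_norm_set) auto

lemma spec_norm_nonneg: "0 \<le> spec_norm m p A"
  using spec_norm_ge[where x = "\<lambda>_. 0"] by simp

lemma spec_norm_mult_le:
  "(\<Sum>i<m. (\<Sum>j<p. A i j * v j)\<^sup>2) \<le> (spec_norm m p A)\<^sup>2 * (\<Sum>j<p. (v j)\<^sup>2)"
proof -
  define s where "s = (\<Sum>j<p. (v j)\<^sup>2)"
  show ?thesis
  proof (cases "s = 0")
    case True
    then have "\<forall>j<p. v j = 0" by (simp add: s_def sum_nonneg_eq_0_iff)
    then show ?thesis by simp
  next
    case False
    then have s_pos: "0 < s" by (simp add: s_def order.not_eq_order_implies_strict sum_nonneg)
    have unit: "(\<Sum>j<p. (v j / sqrt s)\<^sup>2) = 1"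
      using s_pos by (simp add: power_divide s_def flip: sum_divide_distrib)
    have "(\<Sum>i<m. (\<Sum>j<p. A i j * (v j / sqrt s))\<^sup>2) = (\<Sum>i<m. (\<Sum>j<p. A i j * v j)\<^sup>2) / s"
      using s_pos by (simp add: power_divide times_divide_eq_right
          flip: sum_divide_distrib)
    then have "(\<Sum>i<m. (\<Sum>j<p. A i j * v j)\<^sup>2) / s \<le> (spec_norm m p A)\<^sup>2"
      using spec_norm_ge[where x = "\<lambda>j. v j / sqrt s" and A = A and m = m and p = p] unit by (simp add: sqrt_le_D)
    then show ?thesis using s_pos by (simp add: divide_le_eq s_def mult.commute)
  qed
qed

lemma abs_bilinear_le_spec_norm:
  "\<bar>\<Sum>k<p. \<Sum>k'<q. d k * e k' * A k' k\<bar>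
     \<le> spec_norm q p A * ((\<Sum>k<p. (d k)\<^sup>2) + (\<Sum>k<q. (e k)\<^sup>2)) / 2"
proof -
  define a where "a = spec_norm q p A"
  define sd where "sd = (\<Sum>k<p. (d k)\<^sup>2)"
  define se where "se = (\<Sum>k<q. (e k)\<^sup>2)"
  define B where "B = (\<Sum>k<p. \<Sum>k'<q. d k * e k' * A k' k)"
  have a: "0 \<le> a" by (simp add: a_def spec_norm_nonneg)
  have sd: "0 \<le> sd" and se: "0 \<le> se" by (simp_all add: sd_def se_def sum_nonneg)
  have "B = (\<Sum>k'<q. e k' * (\<Sum>k<p. A k' k * d k))"
    unfolding B_def sum_distrib_left by (subst sum.swap) (simp add: mult_ac)
  then have "B\<^sup>2 \<le> se * (\<Sum>k'<q. (\<Sum>k<p. A k' k * d k)\<^sup>2)"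
    unfolding se_def by (simp only: Cauchy_Schwarz_ineq_sum)
  also have "\<dots> \<le> se * (a\<^sup>2 * sd)"
    unfolding a_def sd_def using se by (intro mult_left_mono spec_norm_mult_le)
  finally have "B\<^sup>2 \<le> a\<^sup>2 * (sd * se)" by (simp only: mult_ac)
  then have "\<bar>B\<bar> \<le> a * sqrt (sd * se)"
    using a real_sqrt_le_mono[of "B\<^sup>2" "a\<^sup>2 * (sd * se)"] by (simp add: real_sqrt_mult)
  also have "\<dots> \<le> a * ((sd + se) / 2)"
    using a sd se by (intro mult_left_mono arith_geo_mean_sqrt)
  finally show ?thesis unfolding a_def sd_def se_def B_def by simp
qed

section \<open>The feasible set\<close>

type_synonym gammas = "nat \<Rightarrow> nat \<Rightarrow> nat \<Rightarrow> real"

definition mix :: "real \<Rightarrow> gammas \<Rightarrow> gammas \<Rightarrow> gammas"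
  where "mix u x y = (\<lambda>n k t. u * x n k t + (1 - u) * y n k t)"

lemma EON_domain_outside:
  assumes "G \<in> EON_domain N K T" "\<not> (n \<in> {1..N+1} \<and> k < K n \<and> t < T)"
  shows "G n k t = 0"
  using assms unfolding EON_domain_def by auto

lemma EON_domain_bounds:
  assumes "G \<in> EON_domain N K T"
  shows "0 \<le> G n k t \<and> G n k t \<le> 1"
proof (cases "n \<in> {1..N+1} \<and> k < K n \<and> t < T")
  case True
  then have nonneg: "\<forall>k<K n. 0 \<le> G n k t" and "(\<Sum>k<K n. G n k t) = 1"
    using assms unfolding EON_domain_def by auto
  moreover have "G n k t \<le> (\<Sum>k<K n. G n k t)"
    using True nonneg by (intro member_le_sum) auto
  ultimately show ?thesis using True by auto
qed (simp add: EON_domain_outside[OF assms])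

lemma mix_in_EON_domain:
  assumes "x \<in> EON_domain N K T" "y \<in> EON_domain N K T" "0 \<le> u" "u \<le> 1"
  shows "mix u x y \<in> EON_domain N K T"
proof -
  have "(\<Sum>k<K n. mix u x y n k t) = 1" if "n \<in> {1..N+1}" "t < T" for n t
  proof -
    have "(\<Sum>k<K n. x n k t) = 1" "(\<Sum>k<K n. y n k t) = 1"
      using assms that unfolding EON_domain_def by auto
    then show ?thesis by (simp add: mix_def sum.distrib flip: sum_distrib_left)
  qed
  moreover have "0 \<le> mix u x y n k t" for n k t
    using EON_domain_bounds[OF assms(1)] EON_domain_bounds[OF assms(2)] assms(3,4)
    by (simp add: mix_def)
  ultimately show ?thesis
    using EON_domain_outside[OF assms(1)] EON_domain_outside[OF assms(2)]
    unfolding EON_domain_def by (auto simp: mix_def)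
qed

lemma EON_domain_nonempty:
  assumes "\<forall>n\<in>{1..N+1}. 0 < K n"
  shows "EON_domain N K T \<noteq> {}"
proof -
  define G where "G n (k::nat) t = (if n \<in> {1..N+1} \<and> k = 0 \<and> t < T then 1 else (0::real))" for n k t
  have "G \<in> EON_domain N K T"
    using assms unfolding EON_domain_def by (auto simp: G_def)
  then show ?thesis by blast
qed

lemma continuous_on_entry: "continuous_on D (\<lambda>G :: gammas. G n k t)"
  by (rule continuous_on_product_then_coordinatewise, rule continuous_on_product_then_coordinatewise,
      rule continuous_on_product_then_coordinatewise, rule continuous_on_id)

lemma compact_PiE_UNIV:
  fixes S :: "'a \<Rightarrow> 'b::topological_space set"
  assumes "\<And>i. compact (S i)"
  shows "compact (PiE UNIV S)"
proof -
  have "compactin (product_topology (\<lambda>_. euclidean) UNIV) (PiE UNIV S)"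
    using assms by (simp add: compactin_PiE)
  then show ?thesis by (simp add: euclidean_product_topology)
qed

lemma compact_EON_domain: "compact (EON_domain N K T)"
proof -
  let ?box = "PiE UNIV (\<lambda>_::nat. PiE UNIV (\<lambda>_::nat. PiE UNIV (\<lambda>_::nat. {0..1::real})))"
  have "compact ?box" by (intro compact_PiE_UNIV compact_Icc)
  have "EON_domain N K T =
     (\<Inter>n\<in>{1..N+1}. \<Inter>t\<in>{..<T}. {G. (\<Sum>k<K n. G n k t) = 1} \<inter> (\<Inter>k\<in>{..<K n}. {G. 0 \<le> G n k t}))
     \<inter> (\<Inter>(n, k, t)\<in>{(n, k, t). n \<notin> {1..N+1} \<or> K n \<le> k \<or> T \<le> t}. {G. G n k t = 0})"
    unfolding EON_domain_def by fastforce
  moreover have "closed {G :: gammas. (\<Sum>k<K n. G n k t) = 1}" for n t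
    by (intro closed_Collect_eq continuous_on_sum continuous_on_entry continuous_on_const)
  moreover have "closed {G :: gammas. 0 \<le> G n k t}" for n k t
    by (intro closed_Collect_le continuous_on_entry continuous_on_const)
  moreover have "closed {G :: gammas. G n k t = (0::real)}" for n k t
    by (intro closed_Collect_eq continuous_on_entry continuous_on_const)
  ultimately have "closed (EON_domain N K T)" by (auto intro!: closed_INT closed_Int)
  moreover have "EON_domain N K T \<subseteq> ?box"
    using EON_domain_bounds by (fastforce simp: PiE_def Pi_def)
  ultimately show ?thesis using \<open>compact ?box\<close>
    by (metis compact_Int_closed inf.absorb_iff2)
qed

lemma continuous_on_EON_L: "continuous_on (EON_domain N K T) (EON_L N K T X g0 S th \<delta> \<epsilon>)"
proof -
  have gam: "continuous_on (EON_domain N K T) (\<lambda>G. gam g0 G n k t)" for n k t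
    by (cases "n = 0") (simp_all add: gam_def continuous_on_entry)
  have "continuous_on (EON_domain N K T) (\<lambda>G. xlogx (gam g0 G n k t))" for n k t
  proof (cases "n = 0")
    case False
    then show ?thesis
      by (intro continuous_on_compose2[OF continuous_on_xlogx gam])
        (auto simp: gam_def EON_domain_bounds)
  qed (simp add: gam_def)
  with gam show ?thesis
    unfolding EON_L_def by (intro continuous_intros)
qed

section \<open>The Jensen gap of the objective\<close>

lemma sum_convex_comb_diff:
  fixes u :: real
  shows "u * sum f A + (1 - u) * sum g A - sum h A = (\<Sum>i\<in>A. u * f i + (1 - u) * g i - h i)"
  by (simp add: sum_distrib_left sum_subtractf sum.distrib)

lemma bilinear_convex_comb_diff:
  fixes u :: real
  shows "u * (\<Sum>k\<in>A. \<Sum>k'\<in>B. a k * b k' * c k k') + (1 - u) * (\<Sum>k\<in>A. \<Sum>k'\<in>B. a' k * b' k' * c k k')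
     - (\<Sum>k\<in>A. \<Sum>k'\<in>B. (u * a k + (1 - u) * a' k) * (u * b k' + (1 - u) * b' k') * c k k')
   = u * (1 - u) * (\<Sum>k\<in>A. \<Sum>k'\<in>B. (a k - a' k) * (b k' - b' k') * c k k')"
proof -
  have "?thesis \<longleftrightarrow>
     (\<Sum>k\<in>A. \<Sum>k'\<in>B. u * (a k * b k' * c k k') + (1 - u) * (a' k * b' k' * c k k')
        - (u * a k + (1 - u) * a' k) * (u * b k' + (1 - u) * b' k') * c k k')
     = (\<Sum>k\<in>A. \<Sum>k'\<in>B. u * (1 - u) * ((a k - a' k) * (b k' - b' k') * c k k'))"
    by (simp add: sum_distrib_left sum.distrib sum_subtractf)
  moreover have "\<dots>" by (intro sum.cong refl) (simp add: algebra_simps)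
  ultimately show ?thesis by blast
qed

definition EON_fit :: "(nat \<Rightarrow> nat) \<Rightarrow> (nat \<Rightarrow> nat \<Rightarrow> real) \<Rightarrow> (nat \<Rightarrow> nat \<Rightarrow> real)
    \<Rightarrow> (nat \<Rightarrow> nat \<Rightarrow> real) \<Rightarrow> gammas \<Rightarrow> nat \<Rightarrow> real" where
  "EON_fit K X g0 S G t =
    (\<Sum>k1<K 1. gam g0 G 1 k1 t * (\<Sum>d<K 0. g0 d t * (X t d - S d k1)\<^sup>2))"

definition EON_coupling :: "nat \<Rightarrow> (nat \<Rightarrow> nat) \<Rightarrow> (nat \<Rightarrow> nat \<Rightarrow> real)
    \<Rightarrow> (nat \<Rightarrow> nat \<Rightarrow> nat \<Rightarrow> real) \<Rightarrow> (nat \<Rightarrow> real) \<Rightarrow> gammas \<Rightarrow> nat \<Rightarrow> real" where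
  "EON_coupling N K g0 th \<delta> G t =
    (\<Sum>n\<in>{1..N}. \<delta> n * (\<Sum>kn<K n. \<Sum>kn1<K (Suc n).
       gam g0 G n kn t * gam g0 G (Suc n) kn1 t * ln (th n kn kn1)))"

definition EON_entropy :: "nat \<Rightarrow> (nat \<Rightarrow> nat) \<Rightarrow> (nat \<Rightarrow> nat \<Rightarrow> real) \<Rightarrow> (nat \<Rightarrow> real)
    \<Rightarrow> gammas \<Rightarrow> nat \<Rightarrow> real" where
  "EON_entropy N K g0 \<epsilon> G t = (\<Sum>n\<in>{0..N+1}. \<epsilon> n * (\<Sum>kn<K n. xlogx (gam g0 G n kn t)))"

lemma EON_L_eq:
  "EON_L N K T X g0 S th \<delta> \<epsilon> G =
    (\<Sum>t<T. EON_fit K X g0 S G t - EON_coupling N K g0 th \<delta> G t + EON_entropy N K g0 \<epsilon> G t)"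
  by (simp add: EON_L_def EON_fit_def EON_coupling_def EON_entropy_def)

lemma EON_fit_mix_gap:
  "u * EON_fit K X g0 S x t + (1 - u) * EON_fit K X g0 S y t - EON_fit K X g0 S (mix u x y) t = 0"
  unfolding EON_fit_def sum_convex_comb_diff
  by (intro sum.neutral ballI) (simp add: gam_def mix_def algebra_simps)

lemma EON_coupling_mix_gap:
  "u * EON_coupling N K g0 th \<delta> x t + (1 - u) * EON_coupling N K g0 th \<delta> y t
     - EON_coupling N K g0 th \<delta> (mix u x y) t
   = - (u * (1 - u) * (\<Sum>n\<in>{1..N}. \<Sum>k<K n. \<Sum>k'<K (Suc n).
          (x n k t - y n k t) * (x (Suc n) k' t - y (Suc n) k' t) * Amat N th \<delta> n k' k))"
proof -
  let ?P = "\<lambda>G n. \<Sum>k<K n. \<Sum>k'<K (Suc n). G n k t * G (Suc n) k' t * ln (th n k k')"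
  let ?D = "\<lambda>n. \<Sum>k<K n. \<Sum>k'<K (Suc n).
      (x n k t - y n k t) * (x (Suc n) k' t - y (Suc n) k' t) * Amat N th \<delta> n k' k"
  have "u * (\<delta> n * ?P x n) + (1 - u) * (\<delta> n * ?P y n) - \<delta> n * ?P (mix u x y) n
      = - (u * (1 - u) * ?D n)" if n: "n \<in> {1..N}" for n
  proof -
    have "u * (\<delta> n * ?P x n) + (1 - u) * (\<delta> n * ?P y n) - \<delta> n * ?P (mix u x y) n
        = \<delta> n * (u * ?P x n + (1 - u) * ?P y n - ?P (mix u x y) n)"
      by (simp add: algebra_simps)
    also have "\<dots> = \<delta> n * (u * (1 - u) * (\<Sum>k<K n. \<Sum>k'<K (Suc n).
        (x n k t - y n k t) * (x (Suc n) k' t - y (Suc n) k' t) * ln (th n k k')))"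
      unfolding mix_def by (subst bilinear_convex_comb_diff) (rule refl)
    also have "\<dots> = - (u * (1 - u) * ?D n)"
      using n by (simp add: Amat_def sum_distrib_left sum_negf[symmetric] mult_ac)
    finally show ?thesis .
  qed
  then have "u * EON_coupling N K g0 th \<delta> x t + (1 - u) * EON_coupling N K g0 th \<delta> y t
     - EON_coupling N K g0 th \<delta> (mix u x y) t = (\<Sum>n\<in>{1..N}. - (u * (1 - u) * ?D n))"
    unfolding EON_coupling_def sum_convex_comb_diff by (intro sum.cong refl) (simp add: gam_def)
  also have "\<dots> = - (u * (1 - u) * (\<Sum>n\<in>{1..N}. ?D n))"
    by (simp only: sum_negf sum_distrib_left)
  finally show ?thesis .
qed

lemma EON_entropy_mix_gap:
  "u * EON_entropy N K g0 \<epsilon> x t + (1 - u) * EON_entropy N K g0 \<epsilon> y t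
     - EON_entropy N K g0 \<epsilon> (mix u x y) t
   = (\<Sum>n\<in>{1..N+1}. \<epsilon> n * (\<Sum>k<K n.
        u * xlogx (x n k t) + (1 - u) * xlogx (y n k t) - xlogx (mix u x y n k t)))"
proof -
  define E where "E G n = (\<Sum>k<K n. xlogx (gam g0 G n k t))" for G n
  have "u * (\<epsilon> 0 * E x 0) + (1 - u) * (\<epsilon> 0 * E y 0) - \<epsilon> 0 * E (mix u x y) 0 = 0"
    by (simp add: E_def gam_def algebra_simps)
  then have "u * EON_entropy N K g0 \<epsilon> x t + (1 - u) * EON_entropy N K g0 \<epsilon> y t
       - EON_entropy N K g0 \<epsilon> (mix u x y) t
     = (\<Sum>n\<in>{1..N+1}. u * (\<epsilon> n * E x n) + (1 - u) * (\<epsilon> n * E y n) - \<epsilon> n * E (mix u x y) n)"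
    unfolding EON_entropy_def sum_convex_comb_diff E_def[symmetric]
    by (simp add: sum.atLeast_Suc_atMost)
  also have "\<dots> = (\<Sum>n\<in>{1..N+1}. \<epsilon> n * (\<Sum>k<K n.
        u * xlogx (x n k t) + (1 - u) * xlogx (y n k t) - xlogx (mix u x y n k t)))"
  proof (rule sum.cong[OF refl])
    fix n assume "n \<in> {1..N+1}"
    then have "E G n = (\<Sum>k<K n. xlogx (G n k t))" for G by (simp add: E_def gam_def)
    then show "u * (\<epsilon> n * E x n) + (1 - u) * (\<epsilon> n * E y n) - \<epsilon> n * E (mix u x y) n
        = \<epsilon> n * (\<Sum>k<K n. u * xlogx (x n k t) + (1 - u) * xlogx (y n k t) - xlogx (mix u x y n k t))"
      unfolding sum_convex_comb_diff[symmetric] by (simp add: algebra_simps)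
  qed
  finally show ?thesis .
qed

lemma EON_L_mix_gap:
  "u * EON_L N K T X g0 S th \<delta> \<epsilon> x + (1 - u) * EON_L N K T X g0 S th \<delta> \<epsilon> y
     - EON_L N K T X g0 S th \<delta> \<epsilon> (mix u x y)
   = (\<Sum>t<T. u * (1 - u) * (\<Sum>n\<in>{1..N}. \<Sum>k<K n. \<Sum>k'<K (Suc n).
            (x n k t - y n k t) * (x (Suc n) k' t - y (Suc n) k' t) * Amat N th \<delta> n k' k)
       + (\<Sum>n\<in>{1..N+1}. \<epsilon> n * (\<Sum>k<K n.
            u * xlogx (x n k t) + (1 - u) * xlogx (y n k t) - xlogx (mix u x y n k t))))"
proof -
  have regroup: "u * (a - b + c) + (1 - u) * (a' - b' + c') - (a'' - b'' + c'')
      = (u * a + (1 - u) * a' - a'') - (u * b + (1 - u) * b' - b'') + (u * c + (1 - u) * c' - c'')"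
    for a b c a' b' c' a'' b'' c'' :: real
    by (simp add: algebra_simps)
  show ?thesis
    unfolding EON_L_eq sum_convex_comb_diff regroup
      EON_fit_mix_gap EON_coupling_mix_gap EON_entropy_mix_gap by simp
qed

definition layer_sqdist :: "(nat \<Rightarrow> nat) \<Rightarrow> nat \<Rightarrow> gammas \<Rightarrow> gammas \<Rightarrow> nat \<Rightarrow> real" where
  "layer_sqdist K T x y n = (\<Sum>t<T. \<Sum>k<K n. (x n k t - y n k t)\<^sup>2)"

lemma coupling_gap_ge:
  "- (\<Sum>t<T. \<Sum>n\<in>{1..N}. \<Sum>k<K n. \<Sum>k'<K (Suc n).
        (x n k t - y n k t) * (x (Suc n) k' t - y (Suc n) k' t) * Amat N th \<delta> n k' k)
   \<le> (\<Sum>n\<in>{1..N}. spec_norm (K (Suc n)) (K n) (Amat N th \<delta> n)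
        * (layer_sqdist K T x y n + layer_sqdist K T x y (Suc n))) / 2"
proof -
  define sq where "sq n t = (\<Sum>k<K n. (x n k t - y n k t)\<^sup>2)" for n t
  define a where "a n = spec_norm (K (Suc n)) (K n) (Amat N th \<delta> n)" for n
  have lsd: "layer_sqdist K T x y n = (\<Sum>t<T. sq n t)" for n
    by (simp add: layer_sqdist_def sq_def)
  have "- (\<Sum>t<T. \<Sum>n\<in>{1..N}. \<Sum>k<K n. \<Sum>k'<K (Suc n).
        (x n k t - y n k t) * (x (Suc n) k' t - y (Suc n) k' t) * Amat N th \<delta> n k' k)
      = (\<Sum>t<T. \<Sum>n\<in>{1..N}. - (\<Sum>k<K n. \<Sum>k'<K (Suc n).
        (x n k t - y n k t) * (x (Suc n) k' t - y (Suc n) k' t) * Amat N th \<delta> n k' k))"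
    by (simp only: sum_negf)
  also have "\<dots> \<le> (\<Sum>t<T. \<Sum>n\<in>{1..N}. a n * (sq n t + sq (Suc n) t) / 2)"
    unfolding a_def sq_def by (intro sum_mono abs_le_D2 abs_bilinear_le_spec_norm)
  also have "\<dots> = (\<Sum>n\<in>{1..N}. a n * (layer_sqdist K T x y n + layer_sqdist K T x y (Suc n))) / 2"
    unfolding lsd sum.distrib[symmetric] sum_distrib_left sum_divide_distrib by (rule sum.swap)
  finally show ?thesis unfolding a_def .
qed

lemma entropy_gap_ge:
  assumes "x \<in> EON_domain N K T" "y \<in> EON_domain N K T" "0 < u" "u < 1"
    and "\<forall>n\<in>{1..N+1}. 0 \<le> \<epsilon> n"
  shows "u * (1 - u) / 2 * (\<Sum>n\<in>{1..N+1}. \<epsilon> n * layer_sqdist K T x y n)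
    \<le> (\<Sum>t<T. \<Sum>n\<in>{1..N+1}. \<epsilon> n * (\<Sum>k<K n.
          u * xlogx (x n k t) + (1 - u) * xlogx (y n k t) - xlogx (mix u x y n k t)))"
proof -
  have "u * (1 - u) / 2 * (\<Sum>n\<in>{1..N+1}. \<epsilon> n * layer_sqdist K T x y n)
      = (\<Sum>t<T. \<Sum>n\<in>{1..N+1}. \<epsilon> n * (\<Sum>k<K n. u * (1 - u) * (x n k t - y n k t)\<^sup>2 / 2))"
    unfolding layer_sqdist_def sum_distrib_left sum_divide_distrib
    by (subst sum.swap) (simp add: mult_ac)
  also have "\<dots> \<le> (\<Sum>t<T. \<Sum>n\<in>{1..N+1}. \<epsilon> n * (\<Sum>k<K n.
          u * xlogx (x n k t) + (1 - u) * xlogx (y n k t) - xlogx (mix u x y n k t)))"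
    unfolding mix_def using assms EON_domain_bounds[OF assms(1)] EON_domain_bounds[OF assms(2)]
    by (intro sum_mono mult_left_mono xlogx_jensen_gap) auto
  finally show ?thesis .
qed

lemma EON_L_mix_gap_ge:
  assumes "x \<in> EON_domain N K T" "y \<in> EON_domain N K T" "0 < u" "u < 1"
    and "\<forall>n\<in>{1..N+1}. 0 \<le> \<epsilon> n"
  shows "u * (1 - u) / 2 * ((\<Sum>n\<in>{1..N+1}. \<epsilon> n * layer_sqdist K T x y n)
      - (\<Sum>n\<in>{1..N}. spec_norm (K (Suc n)) (K n) (Amat N th \<delta> n)
            * (layer_sqdist K T x y n + layer_sqdist K T x y (Suc n))))
    \<le> u * EON_L N K T X g0 S th \<delta> \<epsilon> x + (1 - u) * EON_L N K T X g0 S th \<delta> \<epsilon> y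
      - EON_L N K T X g0 S th \<delta> \<epsilon> (mix u x y)"
proof -
  define C where "C t = (\<Sum>n\<in>{1..N}. \<Sum>k<K n. \<Sum>k'<K (Suc n).
      (x n k t - y n k t) * (x (Suc n) k' t - y (Suc n) k' t) * Amat N th \<delta> n k' k)" for t
  define E where "E t = (\<Sum>n\<in>{1..N+1}. \<epsilon> n * (\<Sum>k<K n.
      u * xlogx (x n k t) + (1 - u) * xlogx (y n k t) - xlogx (mix u x y n k t)))" for t
  define P where "P = (\<Sum>n\<in>{1..N+1}. \<epsilon> n * layer_sqdist K T x y n)"
  define Q where "Q = (\<Sum>n\<in>{1..N}. spec_norm (K (Suc n)) (K n) (Amat N th \<delta> n)
      * (layer_sqdist K T x y n + layer_sqdist K T x y (Suc n)))"
  have "- sum C {..<T} \<le> Q / 2"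
    using coupling_gap_ge unfolding C_def Q_def .
  then have "u * (1 - u) * (- sum C {..<T}) \<le> u * (1 - u) * (Q / 2)"
    using assms(3,4) by (intro mult_left_mono) auto
  moreover have "u * (1 - u) / 2 * P \<le> sum E {..<T}"
    using entropy_gap_ge[OF assms] unfolding P_def E_def .
  moreover have "u * (1 - u) / 2 * (P - Q) = u * (1 - u) / 2 * P - u * (1 - u) * (Q / 2)"
    by (simp add: field_simps)
  moreover have "u * EON_L N K T X g0 S th \<delta> \<epsilon> x + (1 - u) * EON_L N K T X g0 S th \<delta> \<epsilon> y
      - EON_L N K T X g0 S th \<delta> \<epsilon> (mix u x y) = u * (1 - u) * sum C {..<T} + sum E {..<T}"
    unfolding EON_L_mix_gap C_def[symmetric] E_def[symmetric]
    by (simp add: sum.distrib sum_distrib_left)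
  ultimately show ?thesis unfolding P_def[symmetric] Q_def[symmetric] by linarith
qed

section \<open>Strict convexity and the minimiser\<close>

lemma layer_sqdist_nonneg: "0 \<le> layer_sqdist K T x y n"
  by (simp add: layer_sqdist_def sum_nonneg)

lemma layer_sqdist_pos:
  assumes "x \<in> EON_domain N K T" "y \<in> EON_domain N K T" "x \<noteq> y"
  obtains n where "n \<in> {1..N+1}" "0 < layer_sqdist K T x y n"
proof -
  obtain n k t where ne: "x n k t \<noteq> y n k t" using assms(3) by (auto simp: fun_eq_iff)
  then have idx: "n \<in> {1..N+1}" "k < K n" "t < T"
    using EON_domain_outside[OF assms(1)] EON_domain_outside[OF assms(2)] by metis+
  have "0 < (x n k t - y n k t)\<^sup>2" using ne by simp
  also have "\<dots> \<le> (\<Sum>k<K n. (x n k t - y n k t)\<^sup>2)"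
    using idx by (intro member_le_sum) auto
  also have "\<dots> \<le> layer_sqdist K T x y n"
    unfolding layer_sqdist_def using idx by (intro member_le_sum sum_nonneg) auto
  finally show ?thesis using idx that by blast
qed

definition chain_coeff :: "nat \<Rightarrow> (nat \<Rightarrow> real) \<Rightarrow> nat \<Rightarrow> real" where
  "chain_coeff N a n = (if n \<le> N then a n else 0) + (if 2 \<le> n then a (n - 1) else 0)"

lemma sum_chain_eq:
  assumes "1 \<le> N"
  shows "(\<Sum>n\<in>{1..N}. a n * (s n + s (Suc n))) = (\<Sum>n\<in>{1..N+1}. chain_coeff N a n * s n)"
proof -
  have "(\<Sum>n\<in>{1..N}. a n * s n) = (\<Sum>n\<in>{1..N+1}. (if n \<le> N then a n else 0) * s n)"
    by simp
  moreover have "(\<Sum>n\<in>{1..N}. a n * s (Suc n))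
      = (\<Sum>n\<in>{1..N+1}. (if 2 \<le> n then a (n - 1) else 0) * s n)"
  proof -
    have "(\<Sum>n\<in>{1..N+1}. (if 2 \<le> n then a (n - 1) else 0) * s n)
        = (\<Sum>n\<in>{Suc 1..Suc N}. (if 2 \<le> n then a (n - 1) else 0) * s n)"
      using assms by (subst sum.atLeast_Suc_atMost) auto
    then show ?thesis unfolding sum.shift_bounds_cl_Suc_ivl by simp
  qed
  ultimately show ?thesis
    by (simp add: chain_coeff_def distrib_left distrib_right sum.distrib)
qed

lemma chain_coeff_less:
  assumes "1 \<le> N" "\<And>n. 0 \<le> a n"
    and "\<forall>m\<in>{1..N}. \<forall>n\<in>{1..N+1}. a m + a (Suc m) < e n"
    and n: "n \<in> {1..N+1}"
  shows "chain_coeff N a n < e n"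
proof -
  consider "n = 1" | "2 \<le> n" "n \<le> N" | "n = Suc N"
    using n by (cases "n \<le> N"; cases "n = 1") auto
  then show ?thesis
  proof cases
    case 1
    have "1 \<in> {1..N}" "1 \<in> {1..N+1}" using assms(1) by auto
    then have "a 1 + a (Suc 1) < e 1" using assms(3) by blast
    then show ?thesis using 1 assms(1) assms(2)[of "Suc 1"] by (simp add: chain_coeff_def)
  next
    case 2
    then have "n - 1 \<in> {1..N}" "Suc (n - 1) = n" by auto
    then have "a (n - 1) + a n < e n" using assms(3) n by metis
    then show ?thesis using 2 by (simp add: chain_coeff_def)
  next
    case 3
    have "a N + a (Suc N) < e (Suc N)" using assms(1,3) by auto
    then show ?thesis using 3 assms(1) assms(2)[of "Suc N"] by (simp add: chain_coeff_def)
  qed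
qed

lemma chain_quadratic_less:
  fixes a e s :: "nat \<Rightarrow> real"
  assumes "1 \<le> N" "\<And>n. 0 \<le> a n"
    and "\<forall>m\<in>{1..N}. \<forall>n\<in>{1..N+1}. a m + a (Suc m) < e n"
    and "\<forall>n\<in>{1..N+1}. 0 \<le> s n" "n0 \<in> {1..N+1}" "0 < s n0"
  shows "(\<Sum>n\<in>{1..N}. a n * (s n + s (Suc n))) < (\<Sum>n\<in>{1..N+1}. e n * s n)"
proof -
  have coeff: "chain_coeff N a n < e n" if "n \<in> {1..N+1}" for n
    using assms(1-3) that by (rule chain_coeff_less)
  have "(\<Sum>n\<in>{1..N+1}. chain_coeff N a n * s n) < (\<Sum>n\<in>{1..N+1}. e n * s n)"
  proof (rule sum_strict_mono_ex1)
    show "\<forall>n\<in>{1..N+1}. chain_coeff N a n * s n \<le> e n * s n"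
      using coeff assms(4) by (simp add: less_imp_le mult_right_mono)
    show "\<exists>n\<in>{1..N+1}. chain_coeff N a n * s n < e n * s n"
      using coeff[OF assms(5)] assms(5,6) by (intro bexI[of _ n0] mult_strict_right_mono)
  qed simp
  then show ?thesis using sum_chain_eq[OF assms(1)] by simp
qed

lemma EON_L_strictly_convex:
  assumes "1 \<le> N" "\<forall>n\<in>{1..N+1}. 0 < \<epsilon> n"
    and "\<forall>m\<in>{1..N}. \<forall>n\<in>{1..N+1}. spec_norm (K (Suc m)) (K m) (Amat N th \<delta> m)
          + spec_norm (K (Suc (Suc m))) (K (Suc m)) (Amat N th \<delta> (Suc m)) < \<epsilon> n"
  shows "strictly_convex_on_set (EON_domain N K T) (EON_L N K T X g0 S th \<delta> \<epsilon>)"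
  unfolding strictly_convex_on_set_def
proof (intro ballI allI impI, elim conjE)
  fix x y and u :: real
  assume x: "x \<in> EON_domain N K T" and y: "y \<in> EON_domain N K T" and "x \<noteq> y" "0 < u" "u < 1"
  obtain n0 where "n0 \<in> {1..N+1}" "0 < layer_sqdist K T x y n0"
    using layer_sqdist_pos[OF x y \<open>x \<noteq> y\<close>] .
  then have "(\<Sum>n\<in>{1..N}. spec_norm (K (Suc n)) (K n) (Amat N th \<delta> n)
        * (layer_sqdist K T x y n + layer_sqdist K T x y (Suc n)))
      < (\<Sum>n\<in>{1..N+1}. \<epsilon> n * layer_sqdist K T x y n)"
    using assms by (intro chain_quadratic_less spec_norm_nonneg) (auto simp: layer_sqdist_nonneg)
  then have "0 < u * (1 - u) / 2 * ((\<Sum>n\<in>{1..N+1}. \<epsilon> n * layer_sqdist K T x y n)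
      - (\<Sum>n\<in>{1..N}. spec_norm (K (Suc n)) (K n) (Amat N th \<delta> n)
            * (layer_sqdist K T x y n + layer_sqdist K T x y (Suc n))))"
    using \<open>0 < u\<close> \<open>u < 1\<close> by simp
  also have "\<dots> \<le> u * EON_L N K T X g0 S th \<delta> \<epsilon> x + (1 - u) * EON_L N K T X g0 S th \<delta> \<epsilon> y
      - EON_L N K T X g0 S th \<delta> \<epsilon> (mix u x y)"
    using assms(2) by (intro EON_L_mix_gap_ge x y \<open>0 < u\<close> \<open>u < 1\<close>) auto
  finally show "EON_L N K T X g0 S th \<delta> \<epsilon> (\<lambda>n k t. u * x n k t + (1 - u) * y n k t)
      < u * EON_L N K T X g0 S th \<delta> \<epsilon> x + (1 - u) * EON_L N K T X g0 S th \<delta> \<epsilon> y"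
    unfolding mix_def by simp
qed

lemma strictly_convex_on_set_minimizer_unique:
  assumes "strictly_convex_on_set D f" "x \<in> D" "y \<in> D" "mix (1/2) x y \<in> D"
    and "\<forall>z\<in>D. f x \<le> f z" "\<forall>z\<in>D. f y \<le> f z"
  shows "x = y"
proof (rule ccontr)
  assume "x \<noteq> y"
  then have "f (mix u x y) < u * f x + (1 - u) * f y" if "0 < u" "u < 1" for u
    using assms(1-3) that unfolding strictly_convex_on_set_def mix_def by blast
  from this[of "1/2"] have "f (mix (1/2) x y) < 1/2 * f x + (1 - 1/2) * f y" by simp
  moreover have "f x \<le> f (mix (1/2) x y)" "f y \<le> f (mix (1/2) x y)" using assms(4-6) by auto
  ultimately show False by simp
qed

theorem lemma7:
  fixes N T :: nat and K :: "nat \<Rightarrow> nat"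
    and X g0 S :: "nat \<Rightarrow> nat \<Rightarrow> real"
    and th :: "nat \<Rightarrow> nat \<Rightarrow> nat \<Rightarrow> real"
    and \<delta> \<epsilon> :: "nat \<Rightarrow> real"
  assumes N_pos: "1 \<le> N"
    and K_pos: "\<forall>n\<in>{0..N+1}. 0 < K n"
    and g0_nonneg: "\<forall>d<K 0. \<forall>t<T. 0 \<le> g0 d t"
    and delta_pos: "\<forall>n\<in>{1..N}. 0 < \<delta> n"
    and eps_pos: "\<forall>n\<in>{0..N+1}. 0 < \<epsilon> n"
    and th_pos: "\<forall>n\<in>{1..N}. \<forall>k<K n. \<forall>k'<K (Suc n). 0 < th n k k'"
    and th_col: "\<forall>n\<in>{1..N}. \<forall>k'<K (Suc n). (\<Sum>k<K n. th n k k') = 1"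
    and gap: "Min (\<epsilon> ` {1..N+1}) >
       Max ((\<lambda>n. spec_norm (K (Suc n)) (K n) (Amat N th \<delta> n)
               + spec_norm (K (Suc (Suc n))) (K (Suc n)) (Amat N th \<delta> (Suc n))) ` {1..N})"
  shows "strictly_convex_on_set (EON_domain N K T) (EON_L N K T X g0 S th \<delta> \<epsilon>)
     \<and> (\<exists>!G. G \<in> EON_domain N K T \<and>
          (\<forall>G'\<in>EON_domain N K T. EON_L N K T X g0 S th \<delta> \<epsilon> G \<le> EON_L N K T X g0 S th \<delta> \<epsilon> G'))"
proof -
  let ?D = "EON_domain N K T" and ?L = "EON_L N K T X g0 S th \<delta> \<epsilon>"
  have convex: "strictly_convex_on_set ?D ?L"
    using N_pos eps_pos gap by (intro EON_L_strictly_convex) auto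
  have "?D \<noteq> {}" using K_pos by (intro EON_domain_nonempty) auto
  then obtain G where G: "G \<in> ?D" "\<forall>G'\<in>?D. ?L G \<le> ?L G'"
    using continuous_attains_inf[OF compact_EON_domain _ continuous_on_EON_L] by blast
  have "G' = G" if "G' \<in> ?D" "\<forall>G''\<in>?D. ?L G' \<le> ?L G''" for G'
    using strictly_convex_on_set_minimizer_unique[OF convex that(1) G(1) _ that(2) G(2)]
      mix_in_EON_domain[OF that(1) G(1)] by simp
  with convex G show ?thesis by blast
qed

end
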